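(* For any two density operators $\rho$ and $\sigma$ on a finite-dimensional Hilbert space, $\lim_{\alpha\to1}S_{\alpha}(\rho\|\sigma)=U(\rho\|\sigma)$.
   Context: A density operator is a positive semidefinite operator of unit trace; $\operatorname{supp}(\rho)$ is the span of eigenvectors with nonzero eigenvalues. For $\alpha>0$, $\alpha\neq1$, the quantum relative $\alpha$-entropy is $S_{\alpha}(\rho\|\sigma)=\frac{\alpha}{1-\alpha}\log\operatorname{Tr}(\rho\sigma^{\alpha-1})-\frac{1}{1-\alpha}\log\operatorname{Tr}(\rho^{\alpha})+\log\operatorname{Tr}(\sigma^{\alpha})$ if $\operatorname{supp}(\rho)\subseteq\operatorname{supp}(\sigma)$ (negative powers on the support), and $+\infty$ otherwise. Umegaki's relative entropy is $U(\rho\|\sigma)=\operatorname{Tr}(\rho\log\rho-\rho\log\sigma)$ when $\operatorname{supp}(\rho)\subseteq\operatorname{supp}(\sigma)$ and $+\infty$ otherwise. Conventions: $0\cdot(\pm\infty)=0$, $\log0=-\infty$, $\log(+\infty)=+\infty$. *)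

theory Defs
  imports "HOL-Library.Extended_Real" "Jordan_Normal_Form.Schur_Decomposition"
begin

text \<open>Finite-dimensional Hilbert space = complex vectors of dimension n;
  operators = complex n x n matrices (Jordan_Normal_Form).\<close>

definition mtrace :: "complex mat \<Rightarrow> complex" where
  "mtrace A = (\<Sum>i<dim_row A. A $$ (i, i))"

definition diag_of :: "nat \<Rightarrow> (nat \<Rightarrow> complex) \<Rightarrow> complex mat" where
  "diag_of n d = mat n n (\<lambda>(i, j). if i = j then d i else 0)"

definition unitary_mat :: "nat \<Rightarrow> complex mat \<Rightarrow> bool" where
  "unitary_mat n U \<longleftrightarrow> U \<in> carrier_mat n n \<and> U * mat_adjoint U = 1\<^sub>m n
     \<and> mat_adjoint U * U = 1\<^sub>m n"

definition hermitian_mat :: "nat \<Rightarrow> complex mat \<Rightarrow> bool" where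
  "hermitian_mat n A \<longleftrightarrow> A \<in> carrier_mat n n \<and> mat_adjoint A = A"

definition psd_mat :: "nat \<Rightarrow> complex mat \<Rightarrow> bool" where
  "psd_mat n A \<longleftrightarrow> A \<in> carrier_mat n n \<and>
     (\<forall>v \<in> carrier_vec n. \<exists>r::real. r \<ge> 0 \<and> cscalar_prod (A *\<^sub>v v) v = complex_of_real r)"

definition density_op :: "nat \<Rightarrow> complex mat \<Rightarrow> bool" where
  "density_op n \<rho> \<longleftrightarrow> psd_mat n \<rho> \<and> mtrace \<rho> = 1"

text \<open>Functional calculus for a Hermitian matrix: f(A) = U f(D) U^* for a unitary
  diagonalisation A = U D U^* with real diagonal D (independent of the choice).\<close>
definition mat_fun :: "nat \<Rightarrow> (real \<Rightarrow> real) \<Rightarrow> complex mat \<Rightarrow> complex mat" where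
  "mat_fun n f A = (SOME B. \<exists>U d. unitary_mat n U
      \<and> A = U * diag_of n (\<lambda>i. complex_of_real (d i)) * mat_adjoint U
      \<and> B = U * diag_of n (\<lambda>i. complex_of_real (f (d i))) * mat_adjoint U)"

definition supp :: "nat \<Rightarrow> complex mat \<Rightarrow> complex vec set" where
  "supp n A = LinearCombinations.module.span class_ring (module_vec TYPE(complex) n)
     {v \<in> carrier_vec n. \<exists>c. c \<noteq> 0 \<and> A *\<^sub>v v = c \<cdot>\<^sub>v v}"

definition pow_supp :: "real \<Rightarrow> real \<Rightarrow> real" where
  "pow_supp a x = (if x > 0 then x powr a else 0)"

text \<open>Logarithm on the support, 0 on the kernel (encodes 0 log 0 = 0).\<close>
definition log_supp :: "real \<Rightarrow> real" where
  "log_supp x = (if x > 0 then ln x else 0)"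

definition renyi_rel_entropy :: "nat \<Rightarrow> real \<Rightarrow> complex mat \<Rightarrow> complex mat \<Rightarrow> ereal" where
  "renyi_rel_entropy n \<alpha> \<rho> \<sigma> =
     (if supp n \<rho> \<subseteq> supp n \<sigma> then
        ereal (\<alpha> / (1 - \<alpha>) * ln (Re (mtrace (\<rho> * mat_fun n (pow_supp (\<alpha> - 1)) \<sigma>)))
               - 1 / (1 - \<alpha>) * ln (Re (mtrace (mat_fun n (pow_supp \<alpha>) \<rho>)))
               + ln (Re (mtrace (mat_fun n (pow_supp \<alpha>) \<sigma>))))
      else \<infinity>)"

definition umegaki :: "nat \<Rightarrow> complex mat \<Rightarrow> complex mat \<Rightarrow> ereal" where
  "umegaki n \<rho> \<sigma> =
     (if supp n \<rho> \<subseteq> supp n \<sigma> then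
        ereal (Re (mtrace (\<rho> * mat_fun n log_supp \<rho> - \<rho> * mat_fun n log_supp \<sigma>)))
      else \<infinity>)"

end

theory Submission
  imports Defs
begin

(* Diagonalise rho = U diag(d) U^* and sigma = V diag(e) V^*, and let c_j = <rho v_j, v_j> for the
   columns v_j of V. Then Tr rho^a = sum_i d_i^a, Tr sigma^a = sum_j e_j^a and
   Tr rho sigma^(a-1) = sum_j c_j e_j^(a-1); the support condition makes rho vanish on the kernel
   of sigma, so c_j = 0 whenever e_j = 0. All three sums are differentiable in a and equal 1 at
   a = 1, hence S_a tends to a difference of two derivatives at a = 1, namely
   sum_i d_i log d_i - sum_j c_j log e_j, which is U(rho||sigma). The spectral theorem for Hermitian
   matrices is proved on the way, by extending an orthonormal family of eigenvectors one vector
   at a time inside the orthogonal complement, which the matrix leaves invariant. *)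

section \<open>Adjoints, traces and diagonal matrices\<close>

lemma mat_adjoint_carrier [simp]: "mat_adjoint A \<in> carrier_mat (dim_col A) (dim_row A)"
  and dim_row_mat_adjoint [simp]: "dim_row (mat_adjoint A) = dim_col A"
  and dim_col_mat_adjoint [simp]: "dim_col (mat_adjoint A) = dim_row A"
  unfolding mat_adjoint_def by (auto simp: mat_of_rows_def)

lemma index_mat_adjoint [simp]:
  "i < dim_col A \<Longrightarrow> j < dim_row A \<Longrightarrow> mat_adjoint (A :: complex mat) $$ (i, j) = cnj (A $$ (j, i))"
  unfolding mat_adjoint_def by (auto simp: mat_of_rows_def)

lemma mat_adjoint_mat_adjoint [simp]: "mat_adjoint (mat_adjoint (A :: complex mat)) = A"
  by (rule eq_matI) auto

lemma mat_adjoint_one [simp]: "mat_adjoint (1\<^sub>m n :: complex mat) = 1\<^sub>m n"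
  by (rule eq_matI) auto

lemma mat_adjoint_mult:
  "A \<in> carrier_mat n m \<Longrightarrow> B \<in> carrier_mat m k \<Longrightarrow>
   mat_adjoint (A * B :: complex mat) = mat_adjoint B * mat_adjoint A"
  by (intro eq_matI) (auto simp: scalar_prod_def intro!: sum.cong)

lemma minus_zero_mat [simp]: "A \<in> carrier_mat n m \<Longrightarrow> A - 0\<^sub>m n m = (A :: complex mat)"
  by (intro eq_matI) auto

lemma mat_adjoint_minus:
  "A \<in> carrier_mat n m \<Longrightarrow> B \<in> carrier_mat n m \<Longrightarrow>
   mat_adjoint (A - B :: complex mat) = mat_adjoint A - mat_adjoint B"
  by (intro eq_matI) auto

lemma diag_of_carrier [simp]: "diag_of n d \<in> carrier_mat n n"
  and dim_row_diag_of [simp]: "dim_row (diag_of n d) = n"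
  and dim_col_diag_of [simp]: "dim_col (diag_of n d) = n"
  unfolding diag_of_def by auto

lemma mat_adjoint_diag_of_real [simp]:
  "mat_adjoint (diag_of n (\<lambda>i. complex_of_real (d i))) = diag_of n (\<lambda>i. complex_of_real (d i))"
  by (rule eq_matI) (auto simp: diag_of_def)

lemma cscalar_prod_eq_sum: "w \<in> carrier_vec n \<Longrightarrow> v \<bullet>c w = (\<Sum>r<n. v $ r * cnj (w $ r))"
  by (auto simp: scalar_prod_def atLeast0LessThan)

lemma cscalar_prod_commute_cnj:
  "v \<in> carrier_vec n \<Longrightarrow> w \<in> carrier_vec n \<Longrightarrow> v \<bullet>c w = cnj (w \<bullet>c v)"
  by (simp add: cscalar_prod_eq_sum mult.commute)

lemma cscalar_prod_mult_mat_vec_adjoint: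
  assumes "A \<in> carrier_mat n m" "v \<in> carrier_vec m" "w \<in> carrier_vec n"
  shows "(A *\<^sub>v v) \<bullet>c w = v \<bullet>c (mat_adjoint (A :: complex mat) *\<^sub>v w)"
proof -
  have "(A *\<^sub>v v) \<bullet>c w = (\<Sum>i<n. (\<Sum>l<m. A $$ (i, l) * v $ l) * cnj (w $ i))"
    using assms by (auto simp: scalar_prod_def atLeast0LessThan intro!: sum.cong)
  also have "\<dots> = (\<Sum>l<m. v $ l * cnj (\<Sum>i<n. cnj (A $$ (i, l)) * w $ i))"
    by (simp add: sum_distrib_left sum_distrib_right sum.swap[of _ "{..<n}"] mult_ac)
  also have "\<dots> = v \<bullet>c (mat_adjoint A *\<^sub>v w)"
    using assms by (auto simp: scalar_prod_def atLeast0LessThan intro!: sum.cong)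
  finally show ?thesis .
qed

lemma mtrace_mult_comm:
  assumes "A \<in> carrier_mat n m" "B \<in> carrier_mat m n"
  shows "mtrace (A * B :: complex mat) = mtrace (B * A)"
proof -
  have "mtrace (A * B) = (\<Sum>i<n. \<Sum>l<m. A $$ (i, l) * B $$ (l, i))"
    using assms unfolding mtrace_def
    by (auto simp: scalar_prod_def atLeast0LessThan intro!: sum.cong)
  also have "\<dots> = (\<Sum>l<m. \<Sum>i<n. B $$ (l, i) * A $$ (i, l))"
    by (subst sum.swap) (simp add: mult.commute)
  also have "\<dots> = mtrace (B * A)"
    using assms unfolding mtrace_def
    by (auto simp: scalar_prod_def atLeast0LessThan intro!: sum.cong)
  finally show ?thesis .
qed

lemma mtrace_minus:
  "A \<in> carrier_mat n n \<Longrightarrow> B \<in> carrier_mat n n \<Longrightarrow> mtrace (A - B) = mtrace A - mtrace B"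
  unfolding mtrace_def by (auto simp: sum_subtractf)

lemma mtrace_one [simp]: "mtrace (1\<^sub>m n) = of_nat n"
  unfolding mtrace_def by simp

lemma mtrace_diag_of: "mtrace (diag_of n g) = (\<Sum>i<n. g i)"
  unfolding mtrace_def diag_of_def by simp

lemma index_mult_diag_of:
  "W \<in> carrier_mat n m \<Longrightarrow> i < n \<Longrightarrow> j < m \<Longrightarrow> (W * diag_of m g) $$ (i, j) = W $$ (i, j) * g j"
  unfolding diag_of_def by (simp add: scalar_prod_def if_distrib cong: if_cong)

lemma index_diag_of_mult:
  "W \<in> carrier_mat n m \<Longrightarrow> i < n \<Longrightarrow> j < m \<Longrightarrow> (diag_of n g * W) $$ (i, j) = g i * W $$ (i, j)"
  unfolding diag_of_def by (simp add: scalar_prod_def, subst sum.remove[of _ i]) auto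

lemma index_diag_of_mult_vec:
  "w \<in> carrier_vec n \<Longrightarrow> i < n \<Longrightarrow> (diag_of n g *\<^sub>v w) $ i = g i * w $ i"
  unfolding diag_of_def by (simp add: scalar_prod_def, subst sum.remove[of _ i]) auto

lemma mtrace_mult_diag_of:
  assumes "X \<in> carrier_mat n n"
  shows "mtrace (X * diag_of n g) = (\<Sum>i<n. X $$ (i, i) * g i)"
  unfolding mtrace_def using assms index_mult_diag_of[OF assms] by simp

lemma index_mat_adjoint_mult_vec:
  "(U :: complex mat) \<in> carrier_mat n n \<Longrightarrow> u \<in> carrier_vec n \<Longrightarrow> i < n \<Longrightarrow>
   (mat_adjoint U *\<^sub>v u) $ i = u \<bullet>c col U i"
  by (auto simp: scalar_prod_def mult.commute carrier_matD intro!: sum.cong)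

lemma unitary_matD:
  assumes "unitary_mat n U"
  shows "U \<in> carrier_mat n n" "mat_adjoint U \<in> carrier_mat n n"
    and "U * mat_adjoint U = 1\<^sub>m n" "mat_adjoint U * U = 1\<^sub>m n"
  using assms unfolding unitary_mat_def by auto

lemma col_unitary_carrier: "unitary_mat n U \<Longrightarrow> col U j \<in> carrier_vec n"
  by (metis unitary_matD(1) carrier_matD(1) col_dim)

lemma unitary_mat_adjoint: "unitary_mat n U \<Longrightarrow> unitary_mat n (mat_adjoint U)"
  unfolding unitary_mat_def by auto

lemma unitary_mult_cancel:
  assumes "unitary_mat n U" "X \<in> carrier_mat n m"
  shows "mat_adjoint U * (U * X) = X" "U * (mat_adjoint U * X) = X"
  using unitary_matD[OF assms(1)] assms(2)
  by (simp_all flip: assoc_mult_mat[of "mat_adjoint U" n n U n X m]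
    assoc_mult_mat[of U n n "mat_adjoint U" n X m])

lemma mtrace_unitary_conj:
  assumes U: "unitary_mat n U" and X: "X \<in> carrier_mat n n"
  shows "mtrace (U * X * mat_adjoint U) = mtrace X"
proof -
  note U = unitary_matD[OF U]
  have "mtrace (U * X * mat_adjoint U) = mtrace ((X * mat_adjoint U) * U)"
    using mtrace_mult_comm[OF U(1), of "X * mat_adjoint U"] U X by simp
  also have "\<dots> = mtrace X" using U X by simp
  finally show ?thesis .
qed

lemma diag_entry_adjoint_conj:
  fixes B V :: "complex mat"
  assumes B: "B \<in> carrier_mat n n" and V: "V \<in> carrier_mat n n" and j: "j < n"
  shows "(mat_adjoint V * B * V) $$ (j, j) = (B *\<^sub>v col V j) \<bullet>c col V j"
proof -
  have V': "mat_adjoint V \<in> carrier_mat n n" using V by auto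
  have "(mat_adjoint V * B * V) $$ (j, j) = (mat_adjoint V * (B * V)) $$ (j, j)"
    using assoc_mult_mat[OF V' B V] by simp
  also have "\<dots> = (\<Sum>l<n. cnj (V $$ (l, j)) * (B * V) $$ (l, j))"
    using B V j by (simp add: scalar_prod_def atLeast0LessThan)
  also have "\<dots> = (B *\<^sub>v col V j) \<bullet>c col V j"
    using B V j by (simp add: cscalar_prod_eq_sum[of _ n] mult.commute)
  finally show ?thesis .
qed

section \<open>Positive semidefinite and Hermitian matrices\<close>

lemma quad_form_unit_vec:
  assumes A: "A \<in> carrier_mat n n" and i: "i < n"
  shows "(A *\<^sub>v unit_vec n i) \<bullet>c unit_vec n i = (A $$ (i, i) :: complex)"
proof -
  have "(A *\<^sub>v unit_vec n i) $ k = A $$ (k, i)" if "k < n" for k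
    using A i that by (simp add: unit_vec_def scalar_prod_def if_distrib cong: if_cong)
  with A i show ?thesis
    by (simp add: cscalar_prod_eq_sum[of _ n] unit_vec_def if_distrib cong: if_cong)
qed

lemma quad_form_two_unit_vecs:
  fixes A :: "complex mat" and c :: complex
  assumes A: "A \<in> carrier_mat n n" and ij: "i < n" "j < n" "i \<noteq> j"
  defines "v \<equiv> unit_vec n i + c \<cdot>\<^sub>v unit_vec n j"
  shows "(A *\<^sub>v v) \<bullet>c v =
    A $$ (i, i) + c * A $$ (i, j) + cnj c * A $$ (j, i) + c * cnj c * A $$ (j, j)"
proof -
  have v: "v \<in> carrier_vec n"
    and v_index: "\<And>k. k < n \<Longrightarrow> v $ k = (if k = i then 1 else 0) + (if k = j then c else 0)"
    using ij unfolding v_def by auto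
  have Av: "(A *\<^sub>v v) $ k = A $$ (k, i) + c * A $$ (k, j)" if k: "k < n" for k
  proof -
    have "(A *\<^sub>v v) $ k = (\<Sum>l<n. A $$ (k, l) * v $ l)"
      using A k v by (simp add: scalar_prod_def atLeast0LessThan)
    also have "\<dots> = (\<Sum>l<n. A $$ (k, l) * (if l = i then 1 else 0)) +
        (\<Sum>l<n. A $$ (k, l) * (if l = j then c else 0))"
      by (simp add: v_index distrib_left sum.distrib)
    also have "\<dots> = A $$ (k, i) + c * A $$ (k, j)"
      using ij by (simp add: if_distrib mult.commute cong: if_cong)
    finally show ?thesis .
  qed
  have "(A *\<^sub>v v) \<bullet>c v = (\<Sum>k<n. (A $$ (k, i) + c * A $$ (k, j)) * (if k = i then 1 else 0)) +
      (\<Sum>k<n. (A $$ (k, i) + c * A $$ (k, j)) * (if k = j then cnj c else 0))"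
    using Av v_index
    by (simp add: cscalar_prod_eq_sum[OF v] distrib_left sum.distrib if_distrib[of cnj]
      cong: if_cong)
  also have "\<dots> = A $$ (i, i) + c * A $$ (i, j) + cnj c * A $$ (j, i) + c * cnj c * A $$ (j, j)"
    using ij by (simp add: if_distrib cong: if_cong) (simp add: algebra_simps)
  finally show ?thesis .
qed

lemma psd_mat_carrier: "psd_mat n A \<Longrightarrow> A \<in> carrier_mat n n"
  unfolding psd_mat_def by auto

lemma psd_mat_quad_form:
  assumes "psd_mat n A" "v \<in> carrier_vec n"
  shows "(A *\<^sub>v v) \<bullet>c v = complex_of_real (Re ((A *\<^sub>v v) \<bullet>c v)) \<and> Re ((A *\<^sub>v v) \<bullet>c v) \<ge> 0"
  using assms unfolding psd_mat_def by force

text \<open>The quadratic form of a psd matrix is real on the vectors \<open>e\<^sub>i\<close>, \<open>e\<^sub>i + e\<^sub>j\<close> and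
  \<open>e\<^sub>i + \<i> e\<^sub>j\<close>; this pins down \<open>A\<^sub>j\<^sub>i = cnj A\<^sub>i\<^sub>j\<close>.\<close>
lemma psd_mat_hermitian:
  assumes "psd_mat n A"
  shows "mat_adjoint A = A"
proof -
  have A: "A \<in> carrier_mat n n" using assms by (rule psd_mat_carrier)
  have real: "Im ((A *\<^sub>v v) \<bullet>c v) = 0" if "v \<in> carrier_vec n" for v
    using psd_mat_quad_form[OF assms that] by (metis Im_complex_of_real)
  have diag: "Im (A $$ (i, i)) = 0" if "i < n" for i
    using real[of "unit_vec n i"] quad_form_unit_vec[OF A that] by simp
  have off_diag: "A $$ (j, i) = cnj (A $$ (i, j))" if "i < n" "j < n" "i \<noteq> j" for i j
  proof -
    have "Im (A $$ (i, j) + A $$ (j, i)) = 0"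
      using real[of "unit_vec n i + 1 \<cdot>\<^sub>v unit_vec n j"] quad_form_two_unit_vecs[OF A that, of 1]
        diag that by simp
    moreover have "Re (A $$ (i, j) - A $$ (j, i)) = 0"
      using real[of "unit_vec n i + \<i> \<cdot>\<^sub>v unit_vec n j"] quad_form_two_unit_vecs[OF A that, of \<i>]
        diag that by simp
    ultimately show ?thesis by (simp add: complex_eq_iff)
  qed
  show ?thesis
  proof (rule eq_matI)
    fix i j assume "i < dim_row A" "j < dim_col A"
    with A diag off_diag[of j i] show "mat_adjoint A $$ (i, j) = A $$ (i, j)"
      by (cases "i = j") (auto simp: complex_eq_iff)
  qed (use A in auto)
qed

lemma hermitian_index_cnj:
  "mat_adjoint A = A \<Longrightarrow> A \<in> carrier_mat n n \<Longrightarrow> i < n \<Longrightarrow> j < n \<Longrightarrow> A $$ (j, i) = cnj (A $$ (i, j))"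
  by (metis index_mat_adjoint carrier_matD)

lemma mtrace_mult_self_hermitian:
  fixes A :: "complex mat"
  assumes A: "A \<in> carrier_mat n n" and herm: "mat_adjoint A = A"
  shows "mtrace (A * A) = complex_of_real (\<Sum>i<n. \<Sum>l<n. (cmod (A $$ (i, l)))\<^sup>2)"
proof -
  have "mtrace (A * A) = (\<Sum>i<n. \<Sum>l<n. A $$ (i, l) * A $$ (l, i))"
    using A unfolding mtrace_def by (auto simp: scalar_prod_def atLeast0LessThan intro!: sum.cong)
  also have "\<dots> = (\<Sum>i<n. \<Sum>l<n. complex_of_real ((cmod (A $$ (i, l)))\<^sup>2))"
  proof (intro sum.cong refl)
    fix i l assume "i \<in> {..<n}" "l \<in> {..<n}"
    then have "A $$ (l, i) = cnj (A $$ (i, l))" using hermitian_index_cnj[OF herm A, of i l] by simp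
    then show "A $$ (i, l) * A $$ (l, i) = complex_of_real ((cmod (A $$ (i, l)))\<^sup>2)"
    by (simp only: complex_norm_square)
  qed
  finally show ?thesis by simp
qed

text \<open>Triangularise \<open>A = P B Q\<close> (Schur); \<open>B\<close> is strictly upper triangular, so \<open>tr (B B) = 0\<close>.\<close>
lemma mtrace_square_eq_0_if_eigenvalues_0:
  fixes A :: "complex mat"
  assumes A: "A \<in> carrier_mat n n" and ev: "\<And>a. eigenvalue A a \<Longrightarrow> a = 0"
  shows "mtrace (A * A) = 0"
proof -
  obtain as where cp: "char_poly A = (\<Prod>a\<leftarrow>as. [:- a, 1:])"
    using char_poly_factorized[OF A] by auto
  obtain B P Q where "schur_decomposition A as = (B, P, Q)"
    by (cases "schur_decomposition A as") auto
  note schur = schur_decomposition[OF A cp this]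
  then have B: "B \<in> carrier_mat n n" and P: "P \<in> carrier_mat n n" and Q: "Q \<in> carrier_mat n n"
    and QP: "Q * P = 1\<^sub>m n" and AB: "A = P * B * Q" and ut: "upper_triangular B"
    using A unfolding similar_mat_wit_def Let_def by auto
  have as: "a = 0" if "a \<in> set as" for a
    using that ev eigenvalue_root_char_poly[OF A]
    by (auto simp: cp poly_prod_list prod_list_zero_iff)
  have B_diag: "B $$ (i, i) = 0" if "i < n" for i
    using schur as B that unfolding diag_mat_def by auto
  have "(B * B) $$ (i, i) = 0" if i: "i < n" for i
  proof -
    have "B $$ (i, l) * B $$ (l, i) = 0" if "l < n" for l
      using upper_triangularD[OF ut, of l i] upper_triangularD[OF ut, of i l] B_diag[OF i] B i that
      by (cases l i rule: linorder_cases) auto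
    moreover have "(B * B) $$ (i, i) = (\<Sum>l<n. B $$ (i, l) * B $$ (l, i))"
      using B i by (simp add: scalar_prod_def atLeast0LessThan)
    ultimately show ?thesis by (simp add: sum.neutral)
  qed
  then have BB: "mtrace (B * B) = 0" using B unfolding mtrace_def by simp
  have "A * A = P * (B * B) * Q"
  proof -
    have "A * A = P * B * (Q * P) * B * Q" using AB A B P Q
      by (simp add: assoc_mult_mat[of _ n n _ n _ n])
    also have "\<dots> = P * (B * B) * Q" using QP B P Q by (simp add: assoc_mult_mat[of _ n n _ n _ n])
    finally show ?thesis .
  qed
  then have "mtrace (A * A) = mtrace (B * B * Q * P)"
    using mtrace_mult_comm[of P n n "B * B * Q"] B P Q
    by (simp add: assoc_mult_mat[of _ n n _ n _ n])
  also have "\<dots> = 0" using QP BB B P Q by (simp add: assoc_mult_mat[of _ n n _ n _ n])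
  finally show ?thesis .
qed

lemma hermitian_eq_0_if_eigenvalues_0:
  fixes A :: "complex mat"
  assumes A: "A \<in> carrier_mat n n" and herm: "mat_adjoint A = A"
    and ev: "\<And>a. eigenvalue A a \<Longrightarrow> a = 0"
  shows "A = 0\<^sub>m n n"
proof -
  have "(\<Sum>i<n. \<Sum>l<n. (cmod (A $$ (i, l)))\<^sup>2) = 0"
    using mtrace_square_eq_0_if_eigenvalues_0[OF A ev] mtrace_mult_self_hermitian[OF A herm]
    by (metis of_real_eq_0_iff)
  then have "\<forall>i<n. \<forall>l<n. A $$ (i, l) = 0"
    by (simp add: sum_nonneg_eq_0_iff sum_nonneg)
  with A show ?thesis by (intro eq_matI) auto
qed

section \<open>The spectral theorem\<close>

lemma isometry_complement_projection:
  fixes U :: "complex mat"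
  assumes U: "U \<in> carrier_mat n k" and iso: "mat_adjoint U * U = 1\<^sub>m k"
  defines "P \<equiv> 1\<^sub>m n - U * mat_adjoint U"
  shows "P \<in> carrier_mat n n" "mat_adjoint P = P" "mat_adjoint U * P = 0\<^sub>m k n" "P * P = P"
    and "mtrace P = of_nat n - of_nat k"
proof -
  have U': "mat_adjoint U \<in> carrier_mat k n" using U by auto
  have UU': "U * mat_adjoint U \<in> carrier_mat n n" using U U' by simp
  show P: "P \<in> carrier_mat n n" unfolding P_def using UU' by (rule minus_carrier_mat)
  show "mat_adjoint P = P"
    unfolding P_def
    by (simp add: mat_adjoint_minus[OF one_carrier_mat UU'] mat_adjoint_mult[OF U U'])
  have "mat_adjoint U * P = mat_adjoint U - (mat_adjoint U * U) * mat_adjoint U"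
    unfolding P_def using U U' by (simp add: mult_minus_distrib_mat[OF U' one_carrier_mat UU'])
  then show U'P: "mat_adjoint U * P = 0\<^sub>m k n"
    using U' iso by (simp add: left_mult_one_mat[OF U'])
  have "P * P = 1\<^sub>m n * P - U * mat_adjoint U * P"
    using minus_mult_distrib_mat[OF one_carrier_mat UU' P] unfolding P_def[symmetric] .
  then show "P * P = P" using U'P U U' P by (simp add: assoc_mult_mat[OF U U' P])
  have "mtrace (U * mat_adjoint U) = mtrace (mat_adjoint U * U)"
    by (rule mtrace_mult_comm[OF U U'])
  then show "mtrace P = of_nat n - of_nat k"
    unfolding P_def using iso by (simp add: mtrace_minus[OF one_carrier_mat UU'])
qed

lemma idempotent_mat_fixed_vector:
  fixes P :: "complex mat"
  assumes P: "P \<in> carrier_mat n n" "P * P = P" "P \<noteq> 0\<^sub>m n n"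
  shows "\<exists>y. y \<in> carrier_vec n \<and> y \<noteq> 0\<^sub>v n \<and> P *\<^sub>v y = y"
proof -
  obtain i j where ij: "i < n" "j < n" "P $$ (i, j) \<noteq> 0"
    using P(1,3) by (metis carrier_matD eq_matI index_zero_mat)
  define y where "y = P *\<^sub>v unit_vec n j"
  have y: "y \<in> carrier_vec n" unfolding y_def using P by simp
  have "y $ i \<noteq> 0" unfolding y_def using ij P
    by (simp add: scalar_prod_def unit_vec_def if_distrib cong: if_cong)
  then have "y \<noteq> 0\<^sub>v n" using ij by auto
  moreover have "P *\<^sub>v y = y"
    unfolding y_def using P assoc_mult_mat_vec[of P n n P n "unit_vec n j"] by simp
  ultimately show ?thesis using y by blast
qed

text \<open>With \<open>H = A P = P A P\<close>: an eigenvector of \<open>H\<close> for a nonzero eigenvalue lies in the range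
  of \<open>P\<close>; if there is none, then \<open>H = 0\<close> and the range of \<open>P\<close> lies in the kernel of \<open>A\<close>.\<close>
lemma commuting_projection_eigenvector:
  fixes A P :: "complex mat"
  assumes A: "A \<in> carrier_mat n n" "mat_adjoint A = A"
    and P: "P \<in> carrier_mat n n" "mat_adjoint P = P" "P * P = P" "P * A = A * P" "P \<noteq> 0\<^sub>m n n"
  shows "\<exists>y \<mu>. y \<in> carrier_vec n \<and> y \<noteq> 0\<^sub>v n \<and> P *\<^sub>v y = y \<and> A *\<^sub>v y = \<mu> \<cdot>\<^sub>v y"
proof -
  define H where "H = A * P"
  have H: "H \<in> carrier_mat n n" unfolding H_def using A P by simp
  have "mat_adjoint H = P * A"
    unfolding H_def using A P by (simp add: mat_adjoint_mult[of A n n P n])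
  then have H_herm: "mat_adjoint H = H" unfolding H_def using P by simp
  have PH: "P * H = H"
  proof -
    have "P * H = (P * A) * P" unfolding H_def using A P(1) by simp
    also have "\<dots> = (A * P) * P" by (simp only: P(4))
    also have "\<dots> = H" unfolding H_def using A P by simp
    finally show ?thesis .
  qed
  have AH: "A *\<^sub>v y = H *\<^sub>v y" if "y \<in> carrier_vec n" "P *\<^sub>v y = y" for y
    unfolding H_def using A P that by (metis assoc_mult_mat_vec)
  show ?thesis
  proof (cases "H = 0\<^sub>m n n")
    case True
    obtain y where y: "y \<in> carrier_vec n" "y \<noteq> 0\<^sub>v n" "P *\<^sub>v y = y"
      using idempotent_mat_fixed_vector[OF P(1,3,5)] by blast
    then have "A *\<^sub>v y = 0 \<cdot>\<^sub>v y" using AH True by auto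
    with y show ?thesis by blast
  next
    case False
    then obtain \<mu> where "eigenvalue H \<mu>" "\<mu> \<noteq> 0"
      using hermitian_eq_0_if_eigenvalues_0[OF H H_herm] by blast
    then obtain y where y: "y \<in> carrier_vec n" "y \<noteq> 0\<^sub>v n" "H *\<^sub>v y = \<mu> \<cdot>\<^sub>v y"
      unfolding eigenvalue_def eigenvector_def using H by auto
    have "\<mu> \<cdot>\<^sub>v (P *\<^sub>v y) = \<mu> \<cdot>\<^sub>v y"
      using y P H PH by (metis assoc_mult_mat_vec mult_mat_vec)
    then have "(1 / \<mu>) \<cdot>\<^sub>v (\<mu> \<cdot>\<^sub>v (P *\<^sub>v y)) = (1 / \<mu>) \<cdot>\<^sub>v (\<mu> \<cdot>\<^sub>v y)" by simp
    then have "P *\<^sub>v y = y" using \<open>\<mu> \<noteq> 0\<close> by (simp add: smult_smult_assoc)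
    then show ?thesis using y AH by metis
  qed
qed

lemma eigenvector_orthogonal_to_invariant_isometry:
  fixes A U L :: "complex mat"
  assumes A: "A \<in> carrier_mat n n" "mat_adjoint A = A"
    and U: "U \<in> carrier_mat n k" "mat_adjoint U * U = 1\<^sub>m k" and "k < n"
    and L: "L \<in> carrier_mat k k" "mat_adjoint L = L" and AU: "A * U = U * L"
  shows "\<exists>y \<mu>. y \<in> carrier_vec n \<and> y \<noteq> 0\<^sub>v n \<and> mat_adjoint U *\<^sub>v y = 0\<^sub>v k \<and> A *\<^sub>v y = \<mu> \<cdot>\<^sub>v y"
proof -
  define P where "P = 1\<^sub>m n - U * mat_adjoint U"
  note P = isometry_complement_projection[OF U, folded P_def]
  have U': "mat_adjoint U \<in> carrier_mat k n" using U by auto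
  have U'A: "mat_adjoint U * A = L * mat_adjoint U"
    using mat_adjoint_mult[OF A(1) U(1)] mat_adjoint_mult[OF U(1) L(1)] A L AU by simp
  have "U * mat_adjoint U * A = U * (L * mat_adjoint U)"
    using A(1) U(1) U' by (simp add: U'A)
  also have "\<dots> = (A * U) * mat_adjoint U"
    using U(1) U' L(1) by (simp add: AU)
  also have "\<dots> = A * (U * mat_adjoint U)"
    using A(1) U(1) U' by simp
  finally have "P * A = A * P"
    unfolding P_def using A(1) mult_carrier_mat[OF U(1) U']
    by (simp add: minus_mult_distrib_mat[OF one_carrier_mat]
      mult_minus_distrib_mat[OF A(1) one_carrier_mat])
  moreover have "P \<noteq> 0\<^sub>m n n"
    using P(5) \<open>k < n\<close> by (auto simp: mtrace_def)
  ultimately obtain y \<mu> where y: "y \<in> carrier_vec n" "y \<noteq> 0\<^sub>v n" "P *\<^sub>v y = y" "A *\<^sub>v y = \<mu> \<cdot>\<^sub>v y"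
    using commuting_projection_eigenvector[OF A P(1,2,4)] by blast
  have "mat_adjoint U *\<^sub>v y = (mat_adjoint U * P) *\<^sub>v y"
    using U' P(1) y by (metis assoc_mult_mat_vec)
  then have "mat_adjoint U *\<^sub>v y = 0\<^sub>v k" using P(3) y by auto
  with y show ?thesis by blast
qed

definition mat_of_col_fun :: "nat \<Rightarrow> nat \<Rightarrow> (nat \<Rightarrow> complex vec) \<Rightarrow> complex mat" where
  "mat_of_col_fun n k u = mat n k (\<lambda>(i, j). u j $ i)"

definition orthonormal_vecs :: "nat \<Rightarrow> nat \<Rightarrow> (nat \<Rightarrow> complex vec) \<Rightarrow> bool" where
  "orthonormal_vecs n k u \<longleftrightarrow>
     (\<forall>i<k. u i \<in> carrier_vec n) \<and> (\<forall>i<k. \<forall>j<k. u j \<bullet>c u i = (if i = j then 1 else 0))"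

lemma mat_of_col_fun_carrier [simp]: "mat_of_col_fun n k u \<in> carrier_mat n k"
  and dim_row_mat_of_col_fun [simp]: "dim_row (mat_of_col_fun n k u) = n"
  and dim_col_mat_of_col_fun [simp]: "dim_col (mat_of_col_fun n k u) = k"
  unfolding mat_of_col_fun_def by auto

lemma orthonormal_vecs_isometry:
  assumes "orthonormal_vecs n k u"
  shows "mat_adjoint (mat_of_col_fun n k u) * mat_of_col_fun n k u = 1\<^sub>m k"
proof (rule eq_matI)
  fix i j assume ij: "i < dim_row (1\<^sub>m k :: complex mat)" "j < dim_col (1\<^sub>m k :: complex mat)"
  have uc: "\<forall>i<k. u i \<in> carrier_vec n" using assms unfolding orthonormal_vecs_def by simp
  have "(mat_adjoint (mat_of_col_fun n k u) * mat_of_col_fun n k u) $$ (i, j) =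
      (\<Sum>r<n. u j $ r * cnj (u i $ r))"
    using ij unfolding mat_of_col_fun_def
    by (auto simp: scalar_prod_def atLeast0LessThan mult.commute)
  also have "\<dots> = u j \<bullet>c u i" using uc ij cscalar_prod_eq_sum[of "u i" n "u j"] by simp
  finally show
    "(mat_adjoint (mat_of_col_fun n k u) * mat_of_col_fun n k u) $$ (i, j) = 1\<^sub>m k $$ (i, j)"
    using assms ij unfolding orthonormal_vecs_def by simp
qed auto

lemma mult_mat_of_col_fun_eigenvectors:
  assumes A: "A \<in> carrier_mat n n" and u: "\<forall>i<k. u i \<in> carrier_vec n"
    and eig: "\<forall>i<k. A *\<^sub>v u i = complex_of_real (l i) \<cdot>\<^sub>v u i"
  shows "A * mat_of_col_fun n k u = mat_of_col_fun n k u * diag_of k (\<lambda>i. complex_of_real (l i))"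
proof (rule eq_matI)
  fix r j assume "r < dim_row (mat_of_col_fun n k u * diag_of k (\<lambda>i. complex_of_real (l i)))"
    "j < dim_col (mat_of_col_fun n k u * diag_of k (\<lambda>i. complex_of_real (l i)))"
  then have r: "r < n" and j: "j < k" by (auto simp: mat_of_col_fun_def diag_of_def)
  have "col (mat_of_col_fun n k u) j = u j"
    using u j unfolding mat_of_col_fun_def by (auto intro!: eq_vecI)
  then have "(A * mat_of_col_fun n k u) $$ (r, j) = (A *\<^sub>v u j) $ r" using A r j by simp
  also have "\<dots> = u j $ r * complex_of_real (l j)"
    using eig u r j by (metis carrier_vecD index_smult_vec(1) mult.commute)
  also have "\<dots> = (mat_of_col_fun n k u * diag_of k (\<lambda>i. complex_of_real (l i))) $$ (r, j)"
    unfolding index_mult_diag_of[OF mat_of_col_fun_carrier r j] using r j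
    by (simp add: mat_of_col_fun_def)
  finally show "(A * mat_of_col_fun n k u) $$ (r, j) =
      (mat_of_col_fun n k u * diag_of k (\<lambda>i. complex_of_real (l i))) $$ (r, j)" .
qed (use A in \<open>auto simp: diag_of_def\<close>)

lemma index_mat_adjoint_mat_of_col_fun_mult_vec:
  "\<forall>i<k. u i \<in> carrier_vec n \<Longrightarrow> y \<in> carrier_vec n \<Longrightarrow> i < k \<Longrightarrow>
   (mat_adjoint (mat_of_col_fun n k u) *\<^sub>v y) $ i = y \<bullet>c u i"
  unfolding mat_of_col_fun_def by (auto simp: scalar_prod_def mult.commute intro!: sum.cong)

lemma orthonormal_vecs_Suc:
  assumes "orthonormal_vecs n k u" "x \<in> carrier_vec n" "x \<bullet>c x = 1" "\<forall>i<k. x \<bullet>c u i = 0"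
  shows "orthonormal_vecs n (Suc k) (u(k := x))"
proof -
  have "u i \<bullet>c x = 0" if "i < k" for i
    using assms that cscalar_prod_commute_cnj[of "u i" n x] unfolding orthonormal_vecs_def by simp
  with assms show ?thesis unfolding orthonormal_vecs_def by (auto simp: less_Suc_eq)
qed

lemma hermitian_eigenvalue_real:
  fixes A :: "complex mat"
  assumes A: "A \<in> carrier_mat n n" "mat_adjoint A = A"
    and y: "y \<in> carrier_vec n" "y \<noteq> 0\<^sub>v n" "A *\<^sub>v y = \<mu> \<cdot>\<^sub>v y"
  shows "\<mu> = complex_of_real (Re \<mu>)"
proof -
  have "\<mu> * (y \<bullet>c y) = (A *\<^sub>v y) \<bullet>c y" using y by simp
  also have "\<dots> = y \<bullet>c (A *\<^sub>v y)" using cscalar_prod_mult_mat_vec_adjoint[OF A(1) y(1) y(1)] A by simp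
  also have "\<dots> = cnj \<mu> * (y \<bullet>c y)" using y by (simp add: conjugate_smult_vec)
  finally have "\<mu> = cnj \<mu>" using y by simp
  then show ?thesis by (simp add: complex_eq_iff)
qed

lemma exists_normalizing_scalar:
  assumes "y \<in> carrier_vec n" "y \<noteq> 0\<^sub>v n"
  shows "\<exists>a. (a \<cdot>\<^sub>v y) \<bullet>c (a \<cdot>\<^sub>v y) = (1 :: complex)"
proof -
  have "y \<bullet>c y \<ge> 0" "y \<bullet>c y \<noteq> 0" using assms by auto
  then obtain r where r: "y \<bullet>c y = complex_of_real r" "r > 0"
    by (auto simp: less_eq_complex_def complex_eq_iff intro: that[of "Re (y \<bullet>c y)"])
  define a where "a = complex_of_real (1 / sqrt r)"
  have "(a \<cdot>\<^sub>v y) \<bullet>c (a \<cdot>\<^sub>v y) = a * cnj a * (y \<bullet>c y)"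
    using assms by (simp add: conjugate_smult_vec)
  also have "\<dots> = complex_of_real (1 / sqrt r * (1 / sqrt r) * r)"
    by (simp only: a_def r(1) complex_cnj_complex_of_real of_real_mult)
  also have "\<dots> = 1" using r(2) by (simp add: field_simps)
  finally show ?thesis by blast
qed

lemma orthonormal_eigenvectors_extend:
  fixes A :: "complex mat"
  assumes A: "A \<in> carrier_mat n n" "mat_adjoint A = A" and "k < n"
    and u: "orthonormal_vecs n k u" and eig: "\<forall>i<k. A *\<^sub>v u i = complex_of_real (l i) \<cdot>\<^sub>v u i"
  shows "\<exists>x m. orthonormal_vecs n (Suc k) (u(k := x)) \<and> A *\<^sub>v x = complex_of_real m \<cdot>\<^sub>v x"
proof -
  have uc: "\<forall>i<k. u i \<in> carrier_vec n" using u unfolding orthonormal_vecs_def by auto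
  obtain y \<mu> where y: "y \<in> carrier_vec n" "y \<noteq> 0\<^sub>v n" "A *\<^sub>v y = \<mu> \<cdot>\<^sub>v y"
    and orth: "mat_adjoint (mat_of_col_fun n k u) *\<^sub>v y = 0\<^sub>v k"
    using eigenvector_orthogonal_to_invariant_isometry[OF A mat_of_col_fun_carrier
        orthonormal_vecs_isometry[OF u] \<open>k < n\<close> diag_of_carrier mat_adjoint_diag_of_real
        mult_mat_of_col_fun_eigenvectors[OF A(1) uc eig]]
    by blast
  have y_orth: "y \<bullet>c u i = 0" if "i < k" for i
    using index_mat_adjoint_mat_of_col_fun_mult_vec[OF uc y(1) that] orth that by simp
  obtain a where a: "(a \<cdot>\<^sub>v y) \<bullet>c (a \<cdot>\<^sub>v y) = 1" using exists_normalizing_scalar[OF y(1,2)] by blast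
  define x where "x = a \<cdot>\<^sub>v y"
  have "orthonormal_vecs n (Suc k) (u(k := x))"
    using orthonormal_vecs_Suc[OF u] a y_orth uc y(1) unfolding x_def by simp
  moreover have "A *\<^sub>v x = complex_of_real (Re \<mu>) \<cdot>\<^sub>v x"
    using A(1) y hermitian_eigenvalue_real[OF A y] unfolding x_def
    by (metis mult_mat_vec smult_smult_assoc mult.commute)
  ultimately show ?thesis by blast
qed

lemma orthonormal_eigenvectors_exist:
  fixes A :: "complex mat"
  assumes A: "A \<in> carrier_mat n n" "mat_adjoint A = A" and "k \<le> n"
  shows "\<exists>u l. orthonormal_vecs n k u \<and> (\<forall>i<k. A *\<^sub>v u i = complex_of_real (l i) \<cdot>\<^sub>v u i)"
  using \<open>k \<le> n\<close>
proof (induction k)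
  case 0
  then show ?case by (auto simp: orthonormal_vecs_def)
next
  case (Suc k)
  then obtain u l where u: "orthonormal_vecs n k u" "\<forall>i<k. A *\<^sub>v u i = complex_of_real (l i) \<cdot>\<^sub>v u i"
    by auto
  obtain x m where "orthonormal_vecs n (Suc k) (u(k := x))" "A *\<^sub>v x = complex_of_real m \<cdot>\<^sub>v x"
    using orthonormal_eigenvectors_extend[OF A _ u] Suc.prems by auto
  with u(2) have "orthonormal_vecs n (Suc k) (u(k := x)) \<and>
      (\<forall>i<Suc k. A *\<^sub>v (u(k := x)) i = complex_of_real ((l(k := m)) i) \<cdot>\<^sub>v (u(k := x)) i)"
    by (auto simp: less_Suc_eq)
  then show ?case by blast
qed

theorem hermitian_spectral_decomposition:
  fixes A :: "complex mat"
  assumes A: "A \<in> carrier_mat n n" "mat_adjoint A = A"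
  shows "\<exists>U d. unitary_mat n U \<and> A = U * diag_of n (\<lambda>i. complex_of_real (d i)) * mat_adjoint U"
proof -
  obtain u d where u: "orthonormal_vecs n n u"
    and eig: "\<forall>i<n. A *\<^sub>v u i = complex_of_real (d i) \<cdot>\<^sub>v u i"
    using orthonormal_eigenvectors_exist[OF A order.refl] by blast
  define U where "U = mat_of_col_fun n n u"
  have U: "U \<in> carrier_mat n n" "mat_adjoint U \<in> carrier_mat n n"
    unfolding U_def using mat_adjoint_carrier[of "mat_of_col_fun n n u"] by auto
  have U'U: "mat_adjoint U * U = 1\<^sub>m n" unfolding U_def by (rule orthonormal_vecs_isometry[OF u])
  then have UU': "U * mat_adjoint U = 1\<^sub>m n" by (rule mat_mult_left_right_inverse[OF U(2,1)])
  have "A * U = U * diag_of n (\<lambda>i. complex_of_real (d i))"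
    unfolding U_def using u eig A(1)
    by (simp add: orthonormal_vecs_def mult_mat_of_col_fun_eigenvectors)
  then have "A = U * diag_of n (\<lambda>i. complex_of_real (d i)) * mat_adjoint U"
    using A(1) U UU' by (metis assoc_mult_mat right_mult_one_mat)
  moreover have "unitary_mat n U" unfolding unitary_mat_def using U U'U UU' by simp
  ultimately show ?thesis by blast
qed

section \<open>Functional calculus\<close>

lemma diag_of_intertwine_fun:
  assumes W: "W \<in> carrier_mat n m"
    and eq: "diag_of n (\<lambda>i. complex_of_real (d i)) * W = W * diag_of m (\<lambda>j. complex_of_real (e j))"
  shows "diag_of n (\<lambda>i. complex_of_real (f (d i))) * W =
    W * diag_of m (\<lambda>j. complex_of_real (f (e j)))"
proof (rule eq_matI)
  fix i j assume "i < dim_row (W * diag_of m (\<lambda>j. complex_of_real (f (e j))))"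
    "j < dim_col (W * diag_of m (\<lambda>j. complex_of_real (f (e j))))"
  then have i: "i < n" and j: "j < m" using W by (auto simp: diag_of_def)
  have "complex_of_real (d i) * W $$ (i, j) = W $$ (i, j) * complex_of_real (e j)"
    using arg_cong[OF eq, of "\<lambda>M. M $$ (i, j)"] index_diag_of_mult[OF W i j]
      index_mult_diag_of[OF W i j]
    by simp
  then have "W $$ (i, j) = 0 \<or> d i = e j" by (auto simp: mult.commute)
  then show "(diag_of n (\<lambda>i. complex_of_real (f (d i))) * W) $$ (i, j) =
      (W * diag_of m (\<lambda>j. complex_of_real (f (e j)))) $$ (i, j)"
    using index_diag_of_mult[OF W i j] index_mult_diag_of[OF W i j] by (auto simp: mult.commute)
qed (use W in \<open>auto simp: diag_of_def\<close>)

text \<open>\<open>W = V\<^sup>* U\<close> intertwines the two diagonal matrices, hence also their images under \<open>f\<close>.\<close>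
lemma unitary_diag_fun_unique:
  assumes U: "unitary_mat n U" and V: "unitary_mat n V"
    and eq: "U * diag_of n (\<lambda>i. complex_of_real (d i)) * mat_adjoint U =
             V * diag_of n (\<lambda>i. complex_of_real (e i)) * mat_adjoint V"
  shows "U * diag_of n (\<lambda>i. complex_of_real (f (d i))) * mat_adjoint U =
         V * diag_of n (\<lambda>i. complex_of_real (f (e i))) * mat_adjoint V"
proof -
  let ?D = "diag_of n (\<lambda>i. complex_of_real (d i))" and ?E = "diag_of n (\<lambda>i. complex_of_real (e i))"
  let ?FD = "diag_of n (\<lambda>i. complex_of_real (f (d i)))"
    and ?FE = "diag_of n (\<lambda>i. complex_of_real (f (e i)))"
  note carrier = unitary_matD(1,2)[OF U] unitary_matD(1,2)[OF V]
  note unitary_simps = unitary_mult_cancel[OF U, of _ n] unitary_mult_cancel[OF V, of _ n]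
    unitary_matD(3,4)[OF U] unitary_matD(3,4)[OF V]
    assoc_mult_mat[of _ n n _ n _ n] mult_carrier_mat[of _ n n _ n]
  define W where "W = mat_adjoint V * U"
  have W: "W \<in> carrier_mat n n" unfolding W_def using carrier by simp
  have "?E * W = mat_adjoint V * (V * ?E * mat_adjoint V) * U"
    unfolding W_def using carrier by (simp add: unitary_simps)
  also have "\<dots> = W * ?D"
    unfolding eq[symmetric] W_def using carrier by (simp add: unitary_simps)
  finally have FW: "?FE * W = W * ?FD" by (rule diag_of_intertwine_fun[OF W])
  have "V * ?FE * mat_adjoint V = V * (?FE * W) * mat_adjoint U"
    unfolding W_def using carrier by (simp add: unitary_simps)
  also have "\<dots> = U * ?FD * mat_adjoint U"
    unfolding FW unfolding W_def using carrier by (simp add: unitary_simps)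
  finally show ?thesis by (rule sym)
qed

lemma mat_fun_unitary_diag:
  assumes U: "unitary_mat n U"
    and A: "A = U * diag_of n (\<lambda>i. complex_of_real (d i)) * mat_adjoint U"
  shows "mat_fun n f A = U * diag_of n (\<lambda>i. complex_of_real (f (d i))) * mat_adjoint U"
proof -
  have "\<exists>V e. unitary_mat n V \<and> A = V * diag_of n (\<lambda>i. complex_of_real (e i)) * mat_adjoint V
      \<and> mat_fun n f A = V * diag_of n (\<lambda>i. complex_of_real (f (e i))) * mat_adjoint V"
    unfolding mat_fun_def by (rule someI_ex) (use U A in blast)
  then show ?thesis using unitary_diag_fun_unique[OF U] A by metis
qed

lemma mtrace_mat_fun:
  assumes "unitary_mat n U" "A = U * diag_of n (\<lambda>i. complex_of_real (d i)) * mat_adjoint U"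
  shows "mtrace (mat_fun n f A) = complex_of_real (\<Sum>i<n. f (d i))"
  using mat_fun_unitary_diag[OF assms] mtrace_unitary_conj[OF assms(1) diag_of_carrier]
  by (simp add: mtrace_diag_of)

lemma mtrace_mult_mat_fun:
  assumes B: "B \<in> carrier_mat n n" and V: "unitary_mat n V"
    and S: "S = V * diag_of n (\<lambda>i. complex_of_real (e i)) * mat_adjoint V"
  shows "mtrace (B * mat_fun n g S) =
    (\<Sum>j<n. ((B *\<^sub>v col V j) \<bullet>c col V j) * complex_of_real (g (e j)))"
proof -
  note V' = unitary_matD[OF V]
  let ?G = "diag_of n (\<lambda>i. complex_of_real (g (e i)))"
  have "mtrace (B * mat_fun n g S) = mtrace (mat_adjoint V * (B * V * ?G))"
    unfolding mat_fun_unitary_diag[OF V S]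
    using B V' mtrace_mult_comm[of "B * V * ?G" n n "mat_adjoint V"]
    by (simp add: assoc_mult_mat[of _ n n _ n _ n] mult_carrier_mat[of _ n n _ n])
  also have "\<dots> = mtrace ((mat_adjoint V * B * V) * ?G)"
    using B V' by (simp add: assoc_mult_mat[of _ n n _ n _ n] mult_carrier_mat[of _ n n _ n])
  also have "\<dots> = (\<Sum>j<n. (mat_adjoint V * B * V) $$ (j, j) * complex_of_real (g (e j)))"
    by (rule mtrace_mult_diag_of) (use B V' in simp)
  also have "\<dots> = (\<Sum>j<n. ((B *\<^sub>v col V j) \<bullet>c col V j) * complex_of_real (g (e j)))"
    by (intro sum.cong refl) (simp add: diag_entry_adjoint_conj[OF B V'(1)])
  finally show ?thesis .
qed

lemma quad_form_unitary_col:
  assumes U: "unitary_mat n U"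
    and A: "A = U * diag_of n (\<lambda>i. complex_of_real (d i)) * mat_adjoint U"
    and i: "i < n"
  shows "(A *\<^sub>v col U i) \<bullet>c col U i = complex_of_real (d i)"
proof -
  note U' = unitary_matD[OF U]
  have "A \<in> carrier_mat n n" unfolding A using U' by (simp add: mult_carrier_mat[of _ n n _ n])
  then have "(A *\<^sub>v col U i) \<bullet>c col U i = (mat_adjoint U * A * U) $$ (i, i)"
    by (rule diag_entry_adjoint_conj[OF _ U'(1) i, symmetric])
  also have "mat_adjoint U * A * U = diag_of n (\<lambda>i. complex_of_real (d i))"
    unfolding A using U'
    by (simp add: unitary_mult_cancel[OF U, of _ n] assoc_mult_mat[of _ n n _ n _ n]
        mult_carrier_mat[of _ n n _ n])
  finally show ?thesis using i by (simp add: diag_of_def)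
qed

lemma unitary_conj_diag_col_eigenvector:
  assumes U: "unitary_mat n U" and A: "A = U * diag_of n g * mat_adjoint U" and i: "i < n"
  shows "A *\<^sub>v col U i = g i \<cdot>\<^sub>v col U i"
proof -
  note U' = unitary_matD[OF U]
  have AU: "A * U = U * diag_of n g"
    unfolding A using U'
    by (simp add: assoc_mult_mat[of _ n n _ n _ n] mult_carrier_mat[of _ n n _ n])
  have Ac: "A \<in> carrier_mat n n" unfolding A using U' by (simp add: mult_carrier_mat[of _ n n _ n])
  show ?thesis
  proof (rule eq_vecI)
    fix r assume "r < dim_vec (g i \<cdot>\<^sub>v col U i)"
    then have r: "r < n" using U' by simp
    have "(A *\<^sub>v col U i) $ r = (A * U) $$ (r, i)" using Ac U' r i by simp
    also have "\<dots> = U $$ (r, i) * g i" unfolding AU by (rule index_mult_diag_of[OF U'(1) r i])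
    finally show "(A *\<^sub>v col U i) $ r = (g i \<cdot>\<^sub>v col U i) $ r" using r i U' by simp
  qed (use Ac U' in simp)
qed

lemma unitary_conj_diag_col_kernel:
  assumes U: "unitary_mat n U" "A = U * diag_of n (\<lambda>i. complex_of_real (d i)) * mat_adjoint U"
    and "i < n" "d i = 0"
  shows "A *\<^sub>v col U i = 0\<^sub>v n"
proof -
  have "A *\<^sub>v col U i = 0 \<cdot>\<^sub>v col U i"
    using unitary_conj_diag_col_eigenvector[OF U \<open>i < n\<close>] \<open>d i = 0\<close> by simp
  also have "\<dots> = 0\<^sub>v n" using carrier_vecD[OF col_unitary_carrier[OF U(1)]] by (intro eq_vecI) auto
  finally show ?thesis .
qed

section \<open>Supports\<close>

lemma eigenvector_in_supp:
  assumes "v \<in> carrier_vec n" "A *\<^sub>v v = c \<cdot>\<^sub>v v" "c \<noteq> 0"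
  shows "v \<in> supp n A"
proof -
  interpret vec_space "TYPE(complex)" n .
  have "{v \<in> carrier_vec n. \<exists>c. c \<noteq> 0 \<and> A *\<^sub>v v = c \<cdot>\<^sub>v v} \<subseteq> carrier_vec n" by auto
  from in_own_span[OF this] show ?thesis unfolding supp_def using assms by blast
qed

lemma supp_orthogonal_kernel:
  fixes \<sigma> :: "complex mat"
  assumes \<sigma>: "\<sigma> \<in> carrier_mat n n" "mat_adjoint \<sigma> = \<sigma>"
    and u: "u \<in> carrier_vec n" "\<sigma> *\<^sub>v u = 0\<^sub>v n" and v: "v \<in> supp n \<sigma>"
  shows "v \<bullet>c u = 0"
proof -
  interpret vec_space "TYPE(complex)" n .
  let ?G = "{v \<in> carrier_vec n. \<exists>c. c \<noteq> 0 \<and> \<sigma> *\<^sub>v v = c \<cdot>\<^sub>v v}"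
  obtain a A where v_eq: "v = lincomb a A" and "finite A" and AG: "A \<subseteq> ?G"
    using in_spanE v unfolding supp_def by blast
  have A: "A \<subseteq> carrier_vec n" using AG by auto
  have orth: "w \<bullet>c u = 0" if wA: "w \<in> A" for w
  proof -
    obtain c where w: "w \<in> carrier_vec n" "c \<noteq> 0" "\<sigma> *\<^sub>v w = c \<cdot>\<^sub>v w" using AG wA by auto
    have "c * (w \<bullet>c u) = (\<sigma> *\<^sub>v w) \<bullet>c u" using w u by simp
    also have "\<dots> = w \<bullet>c (\<sigma> *\<^sub>v u)"
      using cscalar_prod_mult_mat_vec_adjoint[OF \<sigma>(1) w(1) u(1)] \<sigma>(2) by simp
    also have "\<dots> = 0" using u w by simp
    finally show ?thesis using w by simp
  qed
  have "v \<bullet>c u = (\<Sum>i<n. (\<Sum>w\<in>A. a w * w $ i) * cnj (u $ i))"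
    using u v_eq lincomb_index[OF _ A] by (simp add: cscalar_prod_eq_sum[OF u(1)])
  also have "\<dots> = (\<Sum>w\<in>A. a w * (w \<bullet>c u))"
    by (simp add: cscalar_prod_eq_sum[OF u(1)] sum_distrib_left sum_distrib_right sum.swap[of _ A]
      mult_ac)
  also have "\<dots> = 0" using orth by simp
  finally show ?thesis .
qed

text \<open>The range of \<open>\<rho>\<close> is spanned by eigenvectors for nonzero eigenvalues, all lying in
  \<open>supp \<sigma> \<perp> ker \<sigma>\<close>.\<close>
lemma kernel_subset_if_supp_subset:
  fixes \<rho> \<sigma> :: "complex mat"
  assumes \<rho>: "\<rho> \<in> carrier_mat n n" "mat_adjoint \<rho> = \<rho>"
    and \<sigma>: "\<sigma> \<in> carrier_mat n n" "mat_adjoint \<sigma> = \<sigma>"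
    and sub: "supp n \<rho> \<subseteq> supp n \<sigma>" and u: "u \<in> carrier_vec n" "\<sigma> *\<^sub>v u = 0\<^sub>v n"
  shows "\<rho> *\<^sub>v u = 0\<^sub>v n"
proof -
  obtain U d where U: "unitary_mat n U"
    and \<rho>_eq: "\<rho> = U * diag_of n (\<lambda>i. complex_of_real (d i)) * mat_adjoint U"
    using hermitian_spectral_decomposition[OF \<rho>] by blast
  note U' = unitary_matD[OF U]
  define w where "w = mat_adjoint U *\<^sub>v u"
  have w: "w \<in> carrier_vec n" unfolding w_def using U' u by simp
  have "complex_of_real (d i) * w $ i = 0" if i: "i < n" for i
  proof (cases "d i = 0")
    case False
    note col = col_unitary_carrier[OF U, of i]
    have "col U i \<in> supp n \<rho>"
      using eigenvector_in_supp[OF col unitary_conj_diag_col_eigenvector[OF U \<rho>_eq i]] False by simp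
    then have "col U i \<bullet>c u = 0" using sub supp_orthogonal_kernel[OF \<sigma> u] by blast
    then have "u \<bullet>c col U i = 0" using cscalar_prod_commute_cnj[OF u(1) col] by simp
    then show ?thesis unfolding w_def using index_mat_adjoint_mult_vec[OF U'(1) u(1) i] by simp
  qed simp
  then have "diag_of n (\<lambda>i. complex_of_real (d i)) *\<^sub>v w = 0\<^sub>v n"
    using index_diag_of_mult_vec[OF w] by (intro eq_vecI) auto
  moreover have "\<rho> *\<^sub>v u = U *\<^sub>v (diag_of n (\<lambda>i. complex_of_real (d i)) *\<^sub>v w)"
    unfolding \<rho>_eq w_def using U' u
    by (simp add: assoc_mult_mat_vec[of _ n n _ n] mult_carrier_mat[of _ n n _ n])
  ultimately show ?thesis using U' by (intro eq_vecI) auto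
qed

section \<open>Density operators\<close>

lemma density_op_spectral:
  assumes "density_op n \<rho>"
  obtains U d where "unitary_mat n U"
    "\<rho> = U * diag_of n (\<lambda>i. complex_of_real (d i)) * mat_adjoint U"
    "\<forall>i<n. d i \<ge> 0" "(\<Sum>i<n. d i) = 1"
proof -
  have psd: "psd_mat n \<rho>" and tr: "mtrace \<rho> = 1" using assms unfolding density_op_def by auto
  obtain U d where U: "unitary_mat n U"
    and \<rho>_eq: "\<rho> = U * diag_of n (\<lambda>i. complex_of_real (d i)) * mat_adjoint U"
    using hermitian_spectral_decomposition[OF psd_mat_carrier[OF psd] psd_mat_hermitian[OF psd]]
    by blast
  have "d i \<ge> 0" if "i < n" for i
    using quad_form_unitary_col[OF U \<rho>_eq that] psd_mat_quad_form[OF psd col_unitary_carrier[OF U]]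
    by (metis Re_complex_of_real)
  moreover have "(\<Sum>i<n. d i) = 1"
    using tr mtrace_unitary_conj[OF U diag_of_carrier]
    by (simp add: \<rho>_eq mtrace_diag_of flip: of_real_sum)
  ultimately show ?thesis using that U \<rho>_eq by blast
qed

lemma density_op_weights:
  assumes "density_op n \<rho>" and V: "unitary_mat n V"
  defines "c \<equiv> \<lambda>j. Re ((\<rho> *\<^sub>v col V j) \<bullet>c col V j)"
  shows "\<forall>j<n. (\<rho> *\<^sub>v col V j) \<bullet>c col V j = complex_of_real (c j)" "(\<Sum>j<n. c j) = 1"
proof -
  have psd: "psd_mat n \<rho>" and tr: "mtrace \<rho> = 1" using assms unfolding density_op_def by auto
  note V' = unitary_matD[OF V] and \<rho> = psd_mat_carrier[OF psd]
  note col = col_unitary_carrier[OF V]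
  show c: "\<forall>j<n. (\<rho> *\<^sub>v col V j) \<bullet>c col V j = complex_of_real (c j)"
    unfolding c_def using psd_mat_quad_form[OF psd col] by blast
  have "1 = mtrace (mat_adjoint V * \<rho> * mat_adjoint (mat_adjoint V))"
    using tr mtrace_unitary_conj[OF unitary_mat_adjoint[OF V] \<rho>] by simp
  also have "\<dots> = (\<Sum>j<n. (mat_adjoint V * \<rho> * V) $$ (j, j))"
    unfolding mtrace_def using \<rho> V' by simp
  also have "\<dots> = (\<Sum>j<n. (\<rho> *\<^sub>v col V j) \<bullet>c col V j)"
    by (intro sum.cong refl) (simp add: diag_entry_adjoint_conj[OF \<rho> V'(1)])
  finally show "(\<Sum>j<n. c j) = 1" using c by (simp flip: of_real_sum)
qed

section \<open>The limit\<close>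

lemma pow_supp_exponent_has_real_derivative:
  "((\<lambda>a. pow_supp (a + s) x) has_real_derivative pow_supp (a0 + s) x * log_supp x) (at a0)"
proof (cases "x > 0")
  case True
  have "((\<lambda>a. x powr (a + s)) has_real_derivative
      x powr (a0 + s) * (1 * ln x + 0 * (a0 + s) / x)) (at a0)"
    by (rule DERIV_powr) (use True in \<open>auto intro!: derivative_eq_intros\<close>)
  then show ?thesis using True unfolding pow_supp_def log_supp_def by simp
next
  case False
  then show ?thesis unfolding pow_supp_def log_supp_def by simp
qed

lemma ln_div_tendsto_derivative:
  assumes "(f has_real_derivative D) (at 1)" "f 1 = 1"
  shows "((\<lambda>a. ln (f a) / (a - 1)) \<longlongrightarrow> D) (at 1)"
proof -
  have "((\<lambda>a. ln (f a)) has_real_derivative inverse (f 1) * D) (at 1)"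
    by (rule DERIV_chain'[OF assms(1)]) (use assms(2) DERIV_ln[of 1] in simp)
  then show ?thesis using assms(2) unfolding has_field_derivative_iff by simp
qed

text \<open>Dividing the logarithms by \<open>\<alpha> - 1\<close> turns the limit into two derivatives at \<open>\<alpha> = 1\<close>.\<close>
lemma renyi_form_tendsto:
  fixes F G K :: "real \<Rightarrow> real"
  assumes F: "(F has_real_derivative DF) (at 1)" "F 1 = 1"
    and G: "(G has_real_derivative DG) (at 1)" "G 1 = 1"
    and K: "(K has_real_derivative DK) (at 1)" "K 1 = 1"
  shows "((\<lambda>a. a / (1 - a) * ln (F a) - 1 / (1 - a) * ln (G a) + ln (K a)) \<longlongrightarrow> DG - DF) (at 1)"
proof -
  have eq: "a / (1 - a) * ln (F a) - 1 / (1 - a) * ln (G a) + ln (K a) =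
      - a * (ln (F a) / (a - 1)) + ln (G a) / (a - 1) + ln (K a)" for a :: real
    by (cases "a = 1") (simp_all add: field_simps)
  have "(K \<longlongrightarrow> 1) (at 1)" using DERIV_isCont[OF K(1)] K(2) by (simp add: isCont_def)
  then have "((\<lambda>a. ln (K a)) \<longlongrightarrow> 0) (at 1)" using tendsto_ln[of K 1] by simp
  then have "((\<lambda>a. - a * (ln (F a) / (a - 1)) + ln (G a) / (a - 1) + ln (K a))
      \<longlongrightarrow> - 1 * DF + DG + 0) (at 1)"
    by (intro tendsto_intros ln_div_tendsto_derivative F G)
  then show ?thesis unfolding eq by simp
qed

lemma pow_supp_1: "x \<ge> 0 \<Longrightarrow> pow_supp 1 x = x"
  unfolding pow_supp_def by simp

lemma pow_supp_0_mult_log_supp: "pow_supp 0 x * log_supp x = log_supp x"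
  unfolding pow_supp_def log_supp_def by simp

text \<open>\<open>c\<close> may charge only indices with \<open>e\<^sub>j > 0\<close>, so that the
  first sum is \<open>1\<close> at \<open>\<alpha> = 1\<close>.\<close>
lemma renyi_sums_tendsto:
  fixes c d e :: "nat \<Rightarrow> real"
  assumes d: "\<forall>i<n. d i \<ge> 0" "(\<Sum>i<n. d i) = 1" and e: "\<forall>j<n. e j \<ge> 0" "(\<Sum>j<n. e j) = 1"
    and c: "(\<Sum>j<n. c j) = 1" "\<forall>j<n. e j = 0 \<longrightarrow> c j = 0"
  shows "((\<lambda>a. a / (1 - a) * ln (\<Sum>j<n. c j * pow_supp (a - 1) (e j))
               - 1 / (1 - a) * ln (\<Sum>i<n. pow_supp a (d i)) + ln (\<Sum>j<n. pow_supp a (e j)))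
          \<longlongrightarrow> (\<Sum>i<n. d i * log_supp (d i)) - (\<Sum>j<n. c j * log_supp (e j))) (at 1)"
proof (rule renyi_form_tendsto)
  have "((\<lambda>a. \<Sum>j<n. c j * pow_supp (a + - 1) (e j)) has_real_derivative
      (\<Sum>j<n. c j * (pow_supp (1 + - 1) (e j) * log_supp (e j)))) (at 1)"
    by (intro DERIV_sum DERIV_cmult pow_supp_exponent_has_real_derivative)
  then show "((\<lambda>a. \<Sum>j<n. c j * pow_supp (a - 1) (e j)) has_real_derivative
      (\<Sum>j<n. c j * log_supp (e j))) (at 1)"
    by (simp add: pow_supp_0_mult_log_supp)
  have "c j * pow_supp (1 - 1) (e j) = c j" if "j < n" for j
    using c(2) e(1) that by (cases "e j > 0") (auto simp: pow_supp_def)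
  then show "(\<Sum>j<n. c j * pow_supp (1 - 1) (e j)) = 1" using c(1)
  by (metis (no_types, lifting) lessThan_iff sum.cong)
  have "((\<lambda>a. \<Sum>i<n. pow_supp (a + 0) (d i)) has_real_derivative
      (\<Sum>i<n. pow_supp (1 + 0) (d i) * log_supp (d i))) (at 1)"
    by (intro DERIV_sum pow_supp_exponent_has_real_derivative)
  then show "((\<lambda>a. \<Sum>i<n. pow_supp a (d i)) has_real_derivative (\<Sum>i<n. d i * log_supp (d i))) (at 1)"
    using d(1) by (simp add: pow_supp_1)
  show "(\<Sum>i<n. pow_supp 1 (d i)) = 1" using d by (simp add: pow_supp_1)
  have "((\<lambda>a. \<Sum>j<n. pow_supp (a + 0) (e j)) has_real_derivative
      (\<Sum>j<n. pow_supp (1 + 0) (e j) * log_supp (e j))) (at 1)"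
    by (intro DERIV_sum pow_supp_exponent_has_real_derivative)
  then show "((\<lambda>a. \<Sum>j<n. pow_supp a (e j)) has_real_derivative (\<Sum>j<n. e j * log_supp (e j))) (at 1)"
    using e(1) by (simp add: pow_supp_1)
  show "(\<Sum>j<n. pow_supp 1 (e j)) = 1" using e by (simp add: pow_supp_1)
qed

lemma renyi_rel_entropy_spectral:
  assumes U: "unitary_mat n U" "\<rho> = U * diag_of n (\<lambda>i. complex_of_real (d i)) * mat_adjoint U"
    and V: "unitary_mat n V" "\<sigma> = V * diag_of n (\<lambda>j. complex_of_real (e j)) * mat_adjoint V"
    and \<rho>: "\<rho> \<in> carrier_mat n n" and sub: "supp n \<rho> \<subseteq> supp n \<sigma>"
    and c: "\<forall>j<n. (\<rho> *\<^sub>v col V j) \<bullet>c col V j = complex_of_real (c j)"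
  shows "renyi_rel_entropy n a \<rho> \<sigma> =
    ereal (a / (1 - a) * ln (\<Sum>j<n. c j * pow_supp (a - 1) (e j))
           - 1 / (1 - a) * ln (\<Sum>i<n. pow_supp a (d i)) + ln (\<Sum>j<n. pow_supp a (e j)))"
  using sub mtrace_mult_mat_fun[OF \<rho> V] mtrace_mat_fun[OF U] mtrace_mat_fun[OF V] c
  unfolding renyi_rel_entropy_def by (simp flip: of_real_mult of_real_sum)

lemma umegaki_spectral:
  assumes U: "unitary_mat n U" "\<rho> = U * diag_of n (\<lambda>i. complex_of_real (d i)) * mat_adjoint U"
    and V: "unitary_mat n V" "\<sigma> = V * diag_of n (\<lambda>j. complex_of_real (e j)) * mat_adjoint V"
    and \<rho>: "\<rho> \<in> carrier_mat n n" and sub: "supp n \<rho> \<subseteq> supp n \<sigma>"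
    and c: "\<forall>j<n. (\<rho> *\<^sub>v col V j) \<bullet>c col V j = complex_of_real (c j)"
  shows "umegaki n \<rho> \<sigma> = ereal ((\<Sum>i<n. d i * log_supp (d i)) - (\<Sum>j<n. c j * log_supp (e j)))"
proof -
  note U' = unitary_matD[OF U(1)] and V' = unitary_matD[OF V(1)]
  have carrier: "\<rho> * mat_fun n log_supp \<rho> \<in> carrier_mat n n"
    "\<rho> * mat_fun n log_supp \<sigma> \<in> carrier_mat n n"
    unfolding mat_fun_unitary_diag[OF U] mat_fun_unitary_diag[OF V] using \<rho> U' V'
    by (simp_all add: mult_carrier_mat[of _ n n _ n])
  have "mtrace (\<rho> * mat_fun n log_supp \<rho>) = complex_of_real (\<Sum>i<n. d i * log_supp (d i))"
    using mtrace_mult_mat_fun[OF \<rho> U] quad_form_unitary_col[OF U] by simp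
  moreover have "mtrace (\<rho> * mat_fun n log_supp \<sigma>) = complex_of_real (\<Sum>j<n. c j * log_supp (e j))"
    using mtrace_mult_mat_fun[OF \<rho> V] c by simp
  ultimately show ?thesis unfolding umegaki_def mtrace_minus[OF carrier] using sub by simp
qed

theorem lemma8:
  fixes n :: nat and \<rho> \<sigma> :: "complex mat"
  assumes "density_op n \<rho>" and "density_op n \<sigma>"
  shows "((\<lambda>\<alpha>. renyi_rel_entropy n \<alpha> \<rho> \<sigma>) \<longlongrightarrow> umegaki n \<rho> \<sigma>)
           (at 1 within {0<..})"
proof (cases "supp n \<rho> \<subseteq> supp n \<sigma>")
  case False
  then show ?thesis unfolding renyi_rel_entropy_def umegaki_def by simp
next
  case sub: True
  have \<rho>: "\<rho> \<in> carrier_mat n n" "mat_adjoint \<rho> = \<rho>" and \<sigma>: "\<sigma> \<in> carrier_mat n n" "mat_adjoint \<sigma> = \<sigma>"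
    using assms psd_mat_carrier psd_mat_hermitian unfolding density_op_def by auto
  obtain U d where U: "unitary_mat n U"
    "\<rho> = U * diag_of n (\<lambda>i. complex_of_real (d i)) * mat_adjoint U"
    and d: "\<forall>i<n. d i \<ge> 0" "(\<Sum>i<n. d i) = 1"
    using density_op_spectral[OF assms(1)] by blast
  obtain V e where V: "unitary_mat n V"
    "\<sigma> = V * diag_of n (\<lambda>i. complex_of_real (e i)) * mat_adjoint V"
    and e: "\<forall>i<n. e i \<ge> 0" "(\<Sum>i<n. e i) = 1"
    using density_op_spectral[OF assms(2)] by blast
  define c where "c j = Re ((\<rho> *\<^sub>v col V j) \<bullet>c col V j)" for j
  have c: "\<forall>j<n. (\<rho> *\<^sub>v col V j) \<bullet>c col V j = complex_of_real (c j)" "(\<Sum>j<n. c j) = 1"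
    using density_op_weights[OF assms(1) V(1)] unfolding c_def by auto
  have "\<forall>j<n. e j = 0 \<longrightarrow> c j = 0"
    using kernel_subset_if_supp_subset[OF \<rho> \<sigma> sub col_unitary_carrier[OF V(1)]]
      unitary_conj_diag_col_kernel[OF V] col_unitary_carrier[OF V(1)] unfolding c_def by simp
  then have "((\<lambda>\<alpha>. renyi_rel_entropy n \<alpha> \<rho> \<sigma>) \<longlongrightarrow> umegaki n \<rho> \<sigma>) (at 1)"
    unfolding renyi_rel_entropy_spectral[OF U V \<rho>(1) sub c(1)]
      umegaki_spectral[OF U V \<rho>(1) sub c(1)]
    using renyi_sums_tendsto[OF d e c(2)] by (intro tendsto_ereal) blast
  then show ?thesis by (rule tendsto_within_subset) simp
qed

end
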